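(* Let $T$ be a tree and let $T'\subseteq T$ be a nonempty subset which is open and connected. Then $\chi_T(T')=2-\mathrm{card}\,\partial_T T'$.
   Context: A tree $T$ is a finite connected graph without cycles, with vertex set $V$ and edge set $E$ (edges are $2$-element subsets of $V$), regarded as the set $V\sqcup E$. It carries the topology whose closed sets are the sub-graphs, i.e. subsets containing both endpoints of each edge they contain. $\overline{T'}$ denotes the closure and $\partial_T T':=\overline{T'}\setminus T'$ the boundary. For a vertex $v$, $\mathrm{val}(v)$ is the number of edges containing $v$, $\chi_T(v):=2-\mathrm{val}(v)$, and for a subset $T'$, $\chi_T(T'):=\sum_{v\in V\cap T'}\chi_T(v)$. *)

theory Defs
  imports "HOL-Analysis.Analysis"
begin

text \<open>A graph with vertex set V and edge set E (edges are 2-element subsets of V).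
  Points of the space T = V \<squnion> E are represented in the sum type: Inl v for vertices,
  Inr e for edges.\<close>

definition is_graph :: "'v set \<Rightarrow> 'v set set \<Rightarrow> bool" where
  "is_graph V E \<longleftrightarrow> finite V \<and>
     (\<forall>e\<in>E. \<exists>u w. e = {u, w} \<and> u \<noteq> w \<and> u \<in> V \<and> w \<in> V)"

definition graph_connected :: "'v set \<Rightarrow> 'v set set \<Rightarrow> bool" where
  "graph_connected V E \<longleftrightarrow> V \<noteq> {} \<and>
     (\<forall>u\<in>V. \<forall>w\<in>V. (u, w) \<in> {(x, y). {x, y} \<in> E}\<^sup>*)"

definition has_cycle :: "'v set \<Rightarrow> 'v set set \<Rightarrow> bool" where
  "has_cycle V E \<longleftrightarrow> (\<exists>vs. length vs \<ge> 3 \<and> distinct vs \<and> set vs \<subseteq> V \<and>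
     (\<forall>i < length vs. {vs ! i, vs ! ((i + 1) mod length vs)} \<in> E))"

definition is_tree :: "'v set \<Rightarrow> 'v set set \<Rightarrow> bool" where
  "is_tree V E \<longleftrightarrow> is_graph V E \<and> graph_connected V E \<and> \<not> has_cycle V E"

definition tree_space :: "'v set \<Rightarrow> 'v set set \<Rightarrow> ('v + 'v set) set" where
  "tree_space V E = Inl ` V \<union> Inr ` E"

definition is_subgraph :: "('v + 'v set) set \<Rightarrow> bool" where
  "is_subgraph S \<longleftrightarrow> (\<forall>e. Inr e \<in> S \<longrightarrow> (\<forall>v\<in>e. Inl v \<in> S))"

definition tree_topology :: "'v set \<Rightarrow> 'v set set \<Rightarrow> ('v + 'v set) topology" where
  "tree_topology V E = topology (\<lambda>U. U \<subseteq> tree_space V E \<and> is_subgraph (tree_space V E - U))"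

definition tree_boundary :: "'v set \<Rightarrow> 'v set set \<Rightarrow> ('v + 'v set) set \<Rightarrow> ('v + 'v set) set" where
  "tree_boundary V E S = (tree_topology V E) closure_of S - S"

definition valence :: "'v set set \<Rightarrow> 'v \<Rightarrow> nat" where
  "valence E v = card {e\<in>E. v \<in> e}"

definition chi_vertex :: "'v set set \<Rightarrow> 'v \<Rightarrow> int" where
  "chi_vertex E v = 2 - int (valence E v)"

definition chi_set :: "'v set \<Rightarrow> 'v set set \<Rightarrow> ('v + 'v set) set \<Rightarrow> int" where
  "chi_set V E S = (\<Sum>v\<in>{v\<in>V. Inl v \<in> S}. chi_vertex E v)"

end

theory Submission
  imports Defs
begin

text \<open>Write V', E' for the vertices and edges lying in T', and B for the vertices
  of \<partial>T'. As T' is open, B consists of the vertices outside T' incident to an edge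
  of T', and every vertex of T' has all its edges in T'. Counting incidences gives
  \<chi>(T') = 2|V'| - 2|E'| + D, where D counts the dangling ends: pairs (e, b) with
  e \<in> E' and b \<in> e outside T'. Two trees provide the missing relations. The closure
  (V' \<union> B, E') is a subtree, so |V'| + |B| = |E'| + 1. The graph obtained from T' by
  giving every dangling end its own new endpoint is a tree too (connected because T' is,
  acyclic because the new endpoints are leaves), so |V'| + D = |E'| + 1. Hence D = |B|
  and \<chi>(T') = 2 - |B|.\<close>

section \<open>Finite graphs and trees\<close>

definition is_path :: "'v set set \<Rightarrow> 'v list \<Rightarrow> bool" where
  "is_path F vs \<longleftrightarrow> distinct vs \<and> (\<forall>i. Suc i < length vs \<longrightarrow> {vs ! i, vs ! Suc i} \<in> F)"

lemma is_graph_edgeE: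
  assumes "is_graph V E" "e \<in> E"
  obtains u w where "e = {u, w}" "u \<noteq> w" "u \<in> V" "w \<in> V"
  using assms unfolding is_graph_def by blast

lemma is_graph_edge_subset: "is_graph V E \<Longrightarrow> e \<in> E \<Longrightarrow> e \<subseteq> V"
  by (auto elim: is_graph_edgeE)

lemma is_graph_finite_edges: "is_graph V E \<Longrightarrow> finite E"
  by (meson Pow_iff finite_Pow_iff finite_subset is_graph_def is_graph_edge_subset subsetI)

lemma has_cycle_mono: "has_cycle W F \<Longrightarrow> W \<subseteq> V \<Longrightarrow> F \<subseteq> E \<Longrightarrow> has_cycle V E"
  unfolding has_cycle_def by blast

lemma is_path_snoc:
  assumes "is_path F vs" "vs \<noteq> []" "x \<notin> set vs" "{last vs, x} \<in> F"
  shows "is_path F (vs @ [x])"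
  using assms unfolding is_path_def
  by (auto simp: nth_append last_conv_nth less_Suc_eq) (metis diff_Suc_Suc diff_zero)

lemma has_cycle_of_path_chord:
  assumes vs: "is_path F vs" "set vs \<subseteq> W" and i: "i + 2 < length vs"
    and chord: "{last vs, vs ! i} \<in> F"
  shows "has_cycle W F"
  unfolding has_cycle_def
proof (intro exI[of _ "drop i vs"] conjI allI impI)
  show "3 \<le> length (drop i vs)" "distinct (drop i vs)" "set (drop i vs) \<subseteq> W"
    using vs i set_drop_subset[of i vs] by (auto simp: is_path_def)
  fix j assume j: "j < length (drop i vs)"
  show "{drop i vs ! j, drop i vs ! ((j + 1) mod length (drop i vs))} \<in> F"
  proof (cases "j + 1 < length (drop i vs)")
    case True
    then show ?thesis using vs(1) by (simp add: is_path_def add.commute)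
  next
    case False
    then have len: "length (drop i vs) = Suc j" and "i + j = length vs - 1" "vs \<noteq> []"
      using j by auto
    then have "vs ! (i + j) = last vs" by (simp add: last_conv_nth)
    with len chord i show ?thesis by (simp add: insert_commute)
  qed
qed

text \<open>The last vertex of a longest path in a forest is a leaf.\<close>
lemma acyclic_graph_has_leaf:
  assumes g: "is_graph W F" and acyclic: "\<not> has_cycle W F" and "F \<noteq> {}"
  shows "\<exists>l n. {l, n} \<in> F \<and> l \<noteq> n \<and> (\<forall>e\<in>F. l \<in> e \<longrightarrow> e = {l, n})"
proof -
  define P where "P = {vs. is_path F vs \<and> set vs \<subseteq> W \<and> 2 \<le> length vs}"
  have bounded: "length vs < Suc (card W)" if "vs \<in> P" for vs
    using that g card_mono[of W "set vs"]
    by (simp add: P_def is_path_def is_graph_def distinct_card[symmetric])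
  obtain u w where "{u, w} \<in> F" "u \<noteq> w" "u \<in> W" "w \<in> W"
    using \<open>F \<noteq> {}\<close> g by (metis ex_in_conv is_graph_edgeE)
  then have "[u, w] \<in> P" unfolding P_def is_path_def by (auto simp: less_Suc_eq)
  then obtain vs where "vs \<in> P" and longest: "\<And>ws. ws \<in> P \<Longrightarrow> length ws \<le> length vs"
    using ex_has_greatest_nat[of "\<lambda>vs. vs \<in> P" _ length] bounded by blast
  then have path: "is_path F vs" and sub: "set vs \<subseteq> W" and len: "2 \<le> length vs"
    unfolding P_def by auto
  define k where "k = length vs - 2"
  have k: "Suc k < length vs" "Suc k = length vs - 1" using len by (auto simp: k_def)
  then have lastk: "last vs = vs ! Suc k" by (metis last_conv_nth list.size(3) not_less0)
  have edge: "{vs ! k, last vs} \<in> F" using path k(1) unfolding lastk is_path_def by blast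
  have "last vs \<noteq> vs ! k" using path k(1) unfolding lastk is_path_def by (simp add: nth_eq_iff_index_eq)
  moreover have "e = {last vs, vs ! k}" if "e \<in> F" "last vs \<in> e" for e
  proof -
    obtain x where e: "e = {last vs, x}" "x \<noteq> last vs" "x \<in> W"
      using \<open>e \<in> F\<close> \<open>last vs \<in> e\<close> g by (elim is_graph_edgeE) (auto simp: insert_commute)
    have "x \<in> set vs"
    proof (rule ccontr)
      assume "x \<notin> set vs"
      with path len \<open>e \<in> F\<close> e sub have "vs @ [x] \<in> P"
        unfolding P_def by (auto intro: is_path_snoc)
      with longest show False by fastforce
    qed
    then obtain i where i: "i < length vs" "x = vs ! i" by (auto simp: in_set_conv_nth)
    have "i \<noteq> Suc k" using e(2) i lastk by auto
    moreover have "\<not> i + 2 < length vs"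
      using has_cycle_of_path_chord[OF path sub _ \<open>e \<in> F\<close>[unfolded e i(2)]] acyclic by blast
    ultimately have "i = k" using i k unfolding k_def by linarith
    then show ?thesis using e i by simp
  qed
  ultimately show ?thesis using edge by (metis insert_commute)
qed

lemma rtrancl_edges_remove_leaf:
  assumes g: "is_graph W F" and leaf: "\<forall>e\<in>F. l \<in> e \<longrightarrow> e = {l, n}"
    and reach: "(x, y) \<in> {(a, b). {a, b} \<in> F}\<^sup>*" and "x \<noteq> l" "y \<noteq> l"
  shows "(x, y) \<in> {(a, b). {a, b} \<in> F - {{l, n}}}\<^sup>*"
proof -
  have "(x, if y = l then n else y) \<in> {(a, b). {a, b} \<in> F - {{l, n}}}\<^sup>*"
    using reach
  proof (induction rule: rtrancl_induct)
    case base
    then show ?case using \<open>x \<noteq> l\<close> by simp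
  next
    case (step y z)
    then have yz: "{y, z} \<in> F" by simp
    have "y \<noteq> z" using g yz by (auto elim: is_graph_edgeE simp: doubleton_eq_iff)
    consider "z = l" | "y = l" "z \<noteq> l" | "y \<noteq> l" "z \<noteq> l" by blast
    then show ?case
    proof cases
      case 1
      then have "y = n" using leaf yz \<open>y \<noteq> z\<close> by (auto simp: doubleton_eq_iff)
      then show ?thesis using step.IH 1 \<open>y \<noteq> z\<close> by simp
    next
      case 2
      then have "z = n" using leaf yz by (auto simp: doubleton_eq_iff)
      then show ?thesis using step.IH 2 by simp
    next
      case 3
      then have "{y, z} \<noteq> {l, n}" by auto
      then show ?thesis using step.IH 3 yz by (simp add: rtrancl_into_rtrancl)
    qed
  qed
  then show ?thesis using \<open>y \<noteq> l\<close> by simp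
qed

lemma is_tree_remove_leaf:
  assumes tree: "is_tree W F" and ln: "{l, n} \<in> F" "l \<noteq> n"
    and leaf: "\<forall>e\<in>F. l \<in> e \<longrightarrow> e = {l, n}"
  shows "is_tree (W - {l}) (F - {{l, n}})"
  unfolding is_tree_def
proof (intro conjI)
  have g: "is_graph W F" and conn: "graph_connected W F" and acyclic: "\<not> has_cycle W F"
    using tree by (auto simp: is_tree_def)
  show "is_graph (W - {l}) (F - {{l, n}})"
    unfolding is_graph_def
  proof (intro conjI ballI)
    show "finite (W - {l})" using g by (simp add: is_graph_def)
    fix e assume "e \<in> F - {{l, n}}"
    then have "e \<in> F" "l \<notin> e" using leaf by auto
    then show "\<exists>u w. e = {u, w} \<and> u \<noteq> w \<and> u \<in> W - {l} \<and> w \<in> W - {l}"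
      by (elim is_graph_edgeE[OF g]) auto
  qed
  show "graph_connected (W - {l}) (F - {{l, n}})"
    unfolding graph_connected_def
  proof (intro conjI ballI)
    show "W - {l} \<noteq> {}" using is_graph_edge_subset[OF g ln(1)] ln(2) by auto
    fix a b assume "a \<in> W - {l}" "b \<in> W - {l}"
    then show "(a, b) \<in> {(x, y). {x, y} \<in> F - {{l, n}}}\<^sup>*"
      using conn rtrancl_edges_remove_leaf[OF g leaf] unfolding graph_connected_def by simp
  qed
  show "\<not> has_cycle (W - {l}) (F - {{l, n}})"
    using acyclic has_cycle_mono[of "W - {l}" "F - {{l, n}}" W F] by blast
qed

lemma tree_card_vertices: "is_tree W F \<Longrightarrow> card W = card F + 1"
proof (induction "card F" arbitrary: W F)
  case 0
  then have "is_graph W F" and conn: "graph_connected W F" by (auto simp: is_tree_def)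
  then have "F = {}" using "0.hyps" is_graph_finite_edges by (metis card_0_eq)
  obtain u where "u \<in> W" using conn unfolding graph_connected_def by blast
  moreover have "w = u" if "w \<in> W" for w
    using conn \<open>u \<in> W\<close> that \<open>F = {}\<close> unfolding graph_connected_def by auto
  ultimately have "W = {u}" by blast
  then show ?case using \<open>F = {}\<close> by simp
next
  case (Suc m)
  then have g: "is_graph W F" and acyclic: "\<not> has_cycle W F" by (auto simp: is_tree_def)
  have finF: "finite F" and finW: "finite W"
    using g is_graph_finite_edges by (auto simp: is_graph_def)
  have "F \<noteq> {}" using Suc.hyps(2) by auto
  then obtain l n where ln: "{l, n} \<in> F" "l \<noteq> n" and leaf: "\<forall>e\<in>F. l \<in> e \<longrightarrow> e = {l, n}"
    using acyclic_graph_has_leaf[OF g acyclic] by blast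
  have "l \<in> W" using is_graph_edge_subset[OF g ln(1)] by auto
  have "card (W - {l}) = card (F - {{l, n}}) + 1"
    using Suc.hyps(1)[of "F - {{l, n}}"] Suc.hyps(2) is_tree_remove_leaf[OF Suc.prems ln leaf]
      ln(1) finF by simp
  moreover have "0 < card W" "0 < card F" using \<open>l \<in> W\<close> finW ln(1) finF by (auto simp: card_gt_0_iff)
  ultimately show ?case using \<open>l \<in> W\<close> ln(1) finW finF by simp
qed

text \<open>A vertex lying on a cycle lies on two distinct edges of it, since its two
  neighbours on the cycle differ.\<close>
lemma has_cycle_remove_pendants:
  assumes "has_cycle V E"
    and pendant: "\<And>x e e'. x \<in> P \<Longrightarrow> e \<in> E \<Longrightarrow> e' \<in> E \<Longrightarrow> x \<in> e \<Longrightarrow> x \<in> e' \<Longrightarrow> e = e'"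
  shows "has_cycle (V - P) E"
proof -
  obtain vs where L3: "3 \<le> length vs" and dist: "distinct vs" and sub: "set vs \<subseteq> V"
    and edges: "\<And>i. i < length vs \<Longrightarrow> {vs ! i, vs ! ((i + 1) mod length vs)} \<in> E"
    using assms(1) unfolding has_cycle_def by blast
  define L where "L = length vs"
  have "vs ! i \<notin> P" if i: "i < L" for i
  proof
    assume "vs ! i \<in> P"
    define j where "j = (if i + 1 = L then 0 else i + 1)"
    define k where "k = (if i = 0 then L - 1 else i - 1)"
    have jk: "j < L" "k < L" "j \<noteq> i" "k \<noteq> i" "j \<noteq> k" "(i + 1) mod L = j" "(k + 1) mod L = i"
      using i L3 unfolding j_def k_def L_def by auto
    have "{vs ! i, vs ! j} \<in> E" "{vs ! k, vs ! i} \<in> E"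
      using edges[of i] edges[of k] i jk unfolding L_def by auto
    with \<open>vs ! i \<in> P\<close> have "{vs ! i, vs ! j} = {vs ! k, vs ! i}"
      by (intro pendant) auto
    moreover have "vs ! j \<noteq> vs ! i" "vs ! j \<noteq> vs ! k"
      using dist i jk unfolding L_def by (auto simp: nth_eq_iff_index_eq)
    ultimately show False by (auto simp: doubleton_eq_iff)
  qed
  then have "set vs \<subseteq> V - P" using sub by (auto simp: in_set_conv_nth L_def)
  then show ?thesis using L3 dist edges unfolding has_cycle_def by blast
qed

lemma has_cycle_image:
  assumes "has_cycle W F" "inj_on f W" "f ` W \<subseteq> V" "\<And>e. e \<in> F \<Longrightarrow> f ` e \<in> E"
  shows "has_cycle V E"
proof -
  obtain vs where "3 \<le> length vs" "distinct vs" "set vs \<subseteq> W"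
    and edges: "\<And>i. i < length vs \<Longrightarrow> {vs ! i, vs ! ((i + 1) mod length vs)} \<in> F"
    using assms(1) unfolding has_cycle_def by blast
  moreover have "{map f vs ! i, map f vs ! ((i + 1) mod length vs)} \<in> E" if "i < length vs" for i
  proof -
    have "(i + 1) mod length vs < length vs" using that by (intro mod_less_divisor) linarith
    then show ?thesis using assms(4)[OF edges[OF that]] that by simp
  qed
  ultimately show ?thesis
    using assms(3) inj_on_subset[OF assms(2)] unfolding has_cycle_def
    by (intro exI[of _ "map f vs"]) (auto simp: distinct_map image_subset_iff subset_iff)
qed

lemma rtrancl_edges_image:
  assumes "\<And>x y. {x, y} \<in> F \<Longrightarrow> {f x, f y} \<in> E"
    and "(x, y) \<in> {(a, b). {a, b} \<in> F}\<^sup>*"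
  shows "(f x, f y) \<in> {(a, b). {a, b} \<in> E}\<^sup>*"
  using assms(2)
proof (induction rule: rtrancl_induct)
  case (step y z)
  then show ?case using assms(1) by (simp add: rtrancl_into_rtrancl)
qed simp

lemma graph_connected_image:
  assumes "graph_connected W F" "f ` W = V" "\<And>x y. {x, y} \<in> F \<Longrightarrow> {f x, f y} \<in> E"
  shows "graph_connected V E"
  using assms rtrancl_edges_image[of F f E] unfolding graph_connected_def by blast

section \<open>The topology of a graph\<close>

lemma tree_space_vimage_subset:
  assumes "S \<subseteq> tree_space V E"
  shows "Inl -` S \<subseteq> V" "Inr -` S \<subseteq> E"
  using assms by (auto simp: tree_space_def)

lemma openin_tree_topology:
  assumes "is_graph V E"
  shows "openin (tree_topology V E) U \<longleftrightarrow> U \<subseteq> tree_space V E \<and>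
    (\<forall>v e. Inl v \<in> U \<longrightarrow> e \<in> E \<longrightarrow> v \<in> e \<longrightarrow> Inr e \<in> U)"
proof -
  have "(\<lambda>U. U \<subseteq> tree_space V E \<and> is_subgraph (tree_space V E - U)) =
     (\<lambda>U. U \<subseteq> tree_space V E \<and> (\<forall>v e. Inl v \<in> U \<longrightarrow> e \<in> E \<longrightarrow> v \<in> e \<longrightarrow> Inr e \<in> U))"
    using is_graph_edge_subset[OF assms]
    by (auto simp: fun_eq_iff is_subgraph_def tree_space_def)
  moreover have "istopology (\<lambda>U. U \<subseteq> tree_space V E \<and>
      (\<forall>v e. Inl v \<in> U \<longrightarrow> e \<in> E \<longrightarrow> v \<in> e \<longrightarrow> Inr e \<in> U))"
    unfolding istopology_def by (auto; meson)
  ultimately show ?thesis unfolding tree_topology_def by simp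
qed

lemma topspace_tree_topology:
  assumes "is_graph V E"
  shows "topspace (tree_topology V E) = tree_space V E"
  using openin_tree_topology[OF assms] is_graph_edge_subset[OF assms]
  unfolding topspace_def by (auto simp: tree_space_def)

lemma openin_tree_topology_edge:
  "is_graph V E \<Longrightarrow> e \<in> E \<Longrightarrow> openin (tree_topology V E) {Inr e}"
  by (simp add: openin_tree_topology tree_space_def)

lemma openin_tree_topology_star:
  "is_graph V E \<Longrightarrow> v \<in> V \<Longrightarrow> openin (tree_topology V E) (insert (Inl v) (Inr ` {e\<in>E. v \<in> e}))"
  by (auto simp: openin_tree_topology tree_space_def)

definition frontier_vertices :: "('v + 'v set) set \<Rightarrow> 'v set" where
  "frontier_vertices S = \<Union>(Inr -` S) - Inl -` S"

lemma frontier_vertices_subset: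
  assumes "is_graph V E" "S \<subseteq> tree_space V E"
  shows "frontier_vertices S \<subseteq> V"
  using tree_space_vimage_subset(2)[OF assms(2)] is_graph_edge_subset[OF assms(1)]
  unfolding frontier_vertices_def by blast

lemma tree_boundary_openin:
  fixes S :: "('v + 'v set) set"
  assumes g: "is_graph V E" and op: "openin (tree_topology V E) S"
  shows "tree_boundary V E S = Inl ` frontier_vertices S"
proof (intro equalityI subsetI)
  fix x assume "x \<in> tree_boundary V E S"
  then have "x \<in> tree_space V E" and "x \<notin> S"
    and meets: "\<And>U. x \<in> U \<Longrightarrow> openin (tree_topology V E) U \<Longrightarrow> U \<inter> S \<noteq> {}"
    by (auto simp: tree_boundary_def closure_of_def topspace_tree_topology[OF g])
  then obtain v where v: "x = Inl v" "v \<in> V"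
    using openin_tree_topology_edge[OF g] by (fastforce simp: tree_space_def)
  then obtain e where "e \<in> E" "v \<in> e" "Inr e \<in> S"
    using meets[OF _ openin_tree_topology_star[OF g v(2)]] \<open>x \<notin> S\<close> by auto
  then show "x \<in> Inl ` frontier_vertices S"
    using v \<open>x \<notin> S\<close> by (auto simp: frontier_vertices_def)
next
  fix x :: "'v + 'v set" assume "x \<in> Inl ` frontier_vertices S"
  then obtain b e where x: "x = Inl b" "Inl b \<notin> S" and e: "Inr e \<in> S" "b \<in> e"
    by (auto simp: frontier_vertices_def)
  have "e \<in> E" "b \<in> V"
    using e openin_subset[OF op] is_graph_edge_subset[OF g]
    by (auto simp: topspace_tree_topology[OF g] tree_space_def)
  moreover have "U \<inter> S \<noteq> {}" if "Inl b \<in> U" "openin (tree_topology V E) U" for U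
    using that e \<open>e \<in> E\<close> by (auto simp: openin_tree_topology[OF g])
  ultimately show "x \<in> tree_boundary V E S"
    using x by (auto simp: tree_boundary_def closure_of_def topspace_tree_topology[OF g] tree_space_def)
qed

lemma valence_openin:
  assumes "is_graph V E" "openin (tree_topology V E) S" "Inl v \<in> S"
  shows "valence E v = card {e \<in> Inr -` S. v \<in> e}"
proof -
  have "{e\<in>E. v \<in> e} = {e \<in> Inr -` S. v \<in> e}"
    using assms openin_subset[OF assms(2)]
    by (auto simp: openin_tree_topology topspace_tree_topology tree_space_def)
  then show ?thesis unfolding valence_def by simp
qed

section \<open>Counting incidences\<close>

lemma sum_card_incident_plus_card_outer_ends:
  assumes "finite A" "finite F" "\<And>e. e \<in> F \<Longrightarrow> card e = 2"
  shows "(\<Sum>v\<in>A. card {e\<in>F. v \<in> e}) + card (Sigma F (\<lambda>e. e - A)) = 2 * card F"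
proof -
  have fin: "\<And>e. e \<in> F \<Longrightarrow> finite e" using assms(3) card_ge_0_finite by force
  have "(\<Sum>v\<in>A. card {e\<in>F. v \<in> e}) = (\<Sum>e\<in>F. card (e \<inter> A))"
    using sum.swap_restrict[OF assms(1,2), of "\<lambda>_ _. 1::nat" "\<lambda>v e. v \<in> e"]
    by (simp add: Int_def conj_commute)
  moreover have "card (Sigma F (\<lambda>e. e - A)) = (\<Sum>e\<in>F. card (e - A))"
    using assms(2) fin by (simp add: card_SigmaI)
  moreover have "(\<Sum>e\<in>F. card (e \<inter> A)) + (\<Sum>e\<in>F. card (e - A)) = (\<Sum>e\<in>F. 2)"
    unfolding sum.distrib[symmetric] using assms(3) fin
    by (intro sum.cong) (auto simp flip: card_Int_Diff)
  ultimately show ?thesis by simp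
qed

definition dangling_ends :: "('v + 'v set) set \<Rightarrow> ('v set \<times> 'v) set" where
  "dangling_ends S = Sigma (Inr -` S) (\<lambda>e. e - Inl -` S)"

lemma finite_tree_space_vimage:
  assumes "is_graph V E" "S \<subseteq> tree_space V E"
  shows "finite (Inl -` S)" "finite (Inr -` S)"
  using assms tree_space_vimage_subset[OF assms(2)] is_graph_finite_edges[OF assms(1)]
  by (auto simp: is_graph_def intro: finite_subset)

lemma finite_dangling_ends:
  assumes "is_graph V E" "S \<subseteq> tree_space V E"
  shows "finite (dangling_ends S)"
proof -
  have "finite e" if "e \<in> Inr -` S" for e
    using is_graph_edge_subset[OF assms(1)] tree_space_vimage_subset[OF assms(2)] that assms(1)
    by (meson finite_subset is_graph_def subsetD)
  then show ?thesis
    unfolding dangling_ends_def using finite_tree_space_vimage[OF assms] by blast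
qed

lemma chi_set_openin:
  assumes g: "is_graph V E" and sub: "S \<subseteq> tree_space V E" and op: "openin (tree_topology V E) S"
  shows "chi_set V E S =
    2 * int (card (Inl -` S)) - 2 * int (card (Inr -` S)) + int (card (dangling_ends S))"
proof -
  note finV = finite_tree_space_vimage(1)[OF g sub] and finE = finite_tree_space_vimage(2)[OF g sub]
  have card2: "card e = 2" if "e \<in> Inr -` S" for e
  proof -
    have "e \<in> E" using tree_space_vimage_subset[OF sub] that by blast
    then show ?thesis by (rule is_graph_edgeE[OF g]) simp
  qed
  have "chi_set V E S = (\<Sum>v\<in>Inl -` S. 2 - int (card {e \<in> Inr -` S. v \<in> e}))"
    unfolding chi_set_def chi_vertex_def using tree_space_vimage_subset[OF sub]
    by (intro sum.cong) (auto simp: valence_openin[OF g op])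
  also have "\<dots> = 2 * int (card (Inl -` S)) - int (\<Sum>v\<in>Inl -` S. card {e \<in> Inr -` S. v \<in> e})"
    by (simp add: sum_subtractf of_nat_sum)
  finally show ?thesis
    using sum_card_incident_plus_card_outer_ends[OF finV finE card2]
    unfolding dangling_ends_def by linarith
qed

section \<open>Splitting off the dangling ends\<close>

text \<open>The sub-graph spanned by S in which every dangling end (e, b) becomes a new
  vertex of its own, so that distinct edges of S share no vertex outside S.\<close>

definition split_end :: "('v + 'v set) set \<Rightarrow> 'v set \<Rightarrow> 'v \<Rightarrow> 'v + 'v set \<times> 'v" where
  "split_end S e u = (if Inl u \<in> S then Inl u else Inr (e, u))"

definition split_vertices :: "('v + 'v set) set \<Rightarrow> ('v + 'v set \<times> 'v) set" where
  "split_vertices S = Inl ` (Inl -` S) \<union> Inr ` dangling_ends S"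

definition split_edges :: "('v + 'v set) set \<Rightarrow> ('v + 'v set \<times> 'v) set set" where
  "split_edges S = (\<lambda>e. split_end S e ` e) ` (Inr -` S)"

definition split_proj :: "'v + 'v set \<times> 'v \<Rightarrow> 'v" where
  "split_proj x = (case x of Inl u \<Rightarrow> u | Inr p \<Rightarrow> snd p)"

lemma split_proj_split_end [simp]: "split_proj (split_end S e u) = u"
  by (simp add: split_proj_def split_end_def)

lemma split_proj_image_split_end [simp]: "split_proj ` split_end S e ` e = e"
  by (simp add: image_image)

lemma split_end_in_split_vertices:
  "Inr e \<in> S \<Longrightarrow> u \<in> e \<Longrightarrow> split_end S e u \<in> split_vertices S"
  by (auto simp: split_end_def split_vertices_def dangling_ends_def)

lemma card_split_edges: "card (split_edges S) = card (Inr -` S)"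
  unfolding split_edges_def
  by (rule card_image) (metis (no_types, lifting) inj_onI split_proj_image_split_end)

lemma card_split_vertices:
  "finite (Inl -` S) \<Longrightarrow> finite (dangling_ends S) \<Longrightarrow>
    card (split_vertices S) = card (Inl -` S) + card (dangling_ends S)"
  unfolding split_vertices_def
  by (subst card_Un_disjoint) (auto simp: card_image)

lemma split_proj_image_split_vertices:
  "split_proj ` split_vertices S = Inl -` S \<union> frontier_vertices S"
proof (intro equalityI subsetI)
  fix b assume "b \<in> Inl -` S \<union> frontier_vertices S"
  then consider "Inl b \<in> S" | e where "Inr e \<in> S" "b \<in> e" "Inl b \<notin> S"
    by (auto simp: frontier_vertices_def)
  then show "b \<in> split_proj ` split_vertices S"
  proof cases
    case 1
    then show ?thesis by (force simp: split_vertices_def split_proj_def)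
  next
    case 2
    then have "Inr (e, b) \<in> split_vertices S" by (auto simp: split_vertices_def dangling_ends_def)
    then show ?thesis by (force simp: split_proj_def)
  qed
qed (auto simp: split_vertices_def split_proj_def dangling_ends_def frontier_vertices_def)

lemma is_graph_split:
  assumes g: "is_graph V E" and sub: "S \<subseteq> tree_space V E"
  shows "is_graph (split_vertices S) (split_edges S)"
  unfolding is_graph_def
proof (intro conjI ballI)
  show "finite (split_vertices S)"
    using finite_tree_space_vimage[OF g sub] finite_dangling_ends[OF g sub]
    by (simp add: split_vertices_def)
  fix x assume "x \<in> split_edges S"
  then obtain e where e: "Inr e \<in> S" "x = split_end S e ` e" by (auto simp: split_edges_def)
  then have "e \<in> E" using sub by (auto simp: tree_space_def)
  then obtain u w where "e = {u, w}" "u \<noteq> w" by (rule is_graph_edgeE[OF g])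
  moreover have "split_end S e u \<noteq> split_end S e w" if "u \<noteq> w"
    using that by (metis split_proj_split_end)
  ultimately show "\<exists>a b. x = {a, b} \<and> a \<noteq> b \<and> a \<in> split_vertices S \<and> b \<in> split_vertices S"
    using e by (auto intro!: split_end_in_split_vertices)
qed

lemma split_edge_of_dangling_end:
  "x \<in> split_edges S \<Longrightarrow> Inr (e, b) \<in> x \<Longrightarrow> x = split_end S e ` e"
  by (auto simp: split_edges_def split_end_def split: if_splits)

lemma acyclic_split:
  assumes g: "is_graph V E" and sub: "S \<subseteq> tree_space V E" and acyclic: "\<not> has_cycle V E"
  shows "\<not> has_cycle (split_vertices S) (split_edges S)"
proof
  assume "has_cycle (split_vertices S) (split_edges S)"
  then have "has_cycle (split_vertices S - Inr ` dangling_ends S) (split_edges S)"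
    by (rule has_cycle_remove_pendants) (auto dest: split_edge_of_dangling_end)
  then have "has_cycle (Inl ` (Inl -` S)) (split_edges S)"
    by (rule has_cycle_mono) (auto simp: split_vertices_def)
  then have "has_cycle V E"
  proof (rule has_cycle_image[where f = split_proj])
    show "inj_on split_proj (Inl ` (Inl -` S))" by (auto simp: inj_on_def split_proj_def)
    show "split_proj ` Inl ` (Inl -` S) \<subseteq> V"
      using tree_space_vimage_subset[OF sub] by (auto simp: split_proj_def)
    show "split_proj ` x \<in> E" if "x \<in> split_edges S" for x
      using that tree_space_vimage_subset[OF sub] by (auto simp: split_edges_def)
  qed
  with acyclic show False ..
qed

definition split_ends :: "('v + 'v set) set \<Rightarrow> 'v + 'v set \<Rightarrow> ('v + 'v set \<times> 'v) set" where
  "split_ends S z = (case z of Inl v \<Rightarrow> {Inl v} | Inr e \<Rightarrow> split_end S e ` e)"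

lemma split_vertices_eq_Union_split_ends: "split_vertices S = \<Union>(split_ends S ` S)"
  by (force simp: split_vertices_def split_ends_def dangling_ends_def split_end_def split: sum.splits)

lemma split_ends_connected:
  assumes g: "is_graph V E" and sub: "S \<subseteq> tree_space V E" and "z \<in> S"
    and "x \<in> split_ends S z" "y \<in> split_ends S z"
  shows "(x, y) \<in> {(a, b). {a, b} \<in> split_edges S}\<^sup>*"
proof (cases z)
  case (Inl v)
  then show ?thesis using assms by (simp add: split_ends_def)
next
  case (Inr e)
  then obtain u w where uw: "x = split_end S e u" "y = split_end S e w" "u \<in> e" "w \<in> e"
    using assms by (auto simp: split_ends_def)
  show ?thesis
  proof (cases "u = w")
    case False
    have "e \<in> E" using Inr \<open>z \<in> S\<close> sub by (auto simp: tree_space_def)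
    then have "e = {u, w}" using uw False by (auto elim!: is_graph_edgeE[OF g])
    moreover have "split_end S e ` e \<in> split_edges S"
      using Inr \<open>z \<in> S\<close> by (simp add: split_edges_def)
    ultimately show ?thesis using uw by auto
  qed (use uw in simp)
qed

lemma graph_connected_split:
  assumes g: "is_graph V E" and sub: "S \<subseteq> tree_space V E" and "S \<noteq> {}"
    and op: "openin (tree_topology V E) S" and conn: "connectedin (tree_topology V E) S"
  shows "graph_connected (split_vertices S) (split_edges S)"
  unfolding graph_connected_def
proof (intro conjI ballI)
  let ?R = "{(a, b). {a, b} \<in> split_edges S}"
  have open_at: "Inr e \<in> S \<and> Inl v \<in> split_ends S (Inr e)" if "Inl v \<in> S" "e \<in> E" "v \<in> e" for v e
    using that op by (force simp: openin_tree_topology[OF g] split_ends_def split_end_def)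
  have "split_ends S z \<noteq> {}" if "z \<in> S" for z
    using that sub by (auto simp: split_ends_def tree_space_def elim!: is_graph_edgeE[OF g] split: sum.splits)
  then show "split_vertices S \<noteq> {}"
    using \<open>S \<noteq> {}\<close> by (auto simp: split_vertices_eq_Union_split_ends)
  fix a y assume "a \<in> split_vertices S" "y \<in> split_vertices S"
  then obtain za zy where za: "za \<in> S" "a \<in> split_ends S za" and zy: "zy \<in> S" "y \<in> split_ends S zy"
    by (auto simp: split_vertices_eq_Union_split_ends)
  text \<open>The points of S whose split ends are reachable from a are clopen in S.\<close>
  define U where "U = {z \<in> S. \<exists>x\<in>split_ends S z. (a, x) \<in> ?R\<^sup>*}"
  have U_all: "(a, x) \<in> ?R\<^sup>*" if "z \<in> U" "x \<in> split_ends S z" for z x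
    using that split_ends_connected[OF g sub] unfolding U_def by (blast intro: rtrancl_trans)
  have U_Inl: "Inl v \<in> U \<longleftrightarrow> Inl v \<in> S \<and> (a, Inl v) \<in> ?R\<^sup>*" for v
    by (simp add: U_def split_ends_def)
  have "openin (tree_topology V E) U"
    unfolding openin_tree_topology[OF g]
  proof (intro conjI allI impI)
    show "U \<subseteq> tree_space V E" using sub by (auto simp: U_def)
    fix v e assume "Inl v \<in> U" "e \<in> E" "v \<in> e"
    then have "Inr e \<in> S" "Inl v \<in> split_ends S (Inr e)" "(a, Inl v) \<in> ?R\<^sup>*"
      using open_at[of v e] U_Inl by auto
    then show "Inr e \<in> U" unfolding U_def by blast
  qed
  moreover have "openin (tree_topology V E) (S - U)"
    unfolding openin_tree_topology[OF g]
  proof (intro conjI allI impI)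
    show "S - U \<subseteq> tree_space V E" using sub by auto
    fix v e assume "Inl v \<in> S - U" "e \<in> E" "v \<in> e"
    then show "Inr e \<in> S - U" using open_at[of v e] U_all[of "Inr e" "Inl v"] by (auto simp: U_Inl)
  qed
  moreover have "za \<in> U" using za by (auto simp: U_def)
  ultimately have "S \<subseteq> U"
    using connectedinD[OF conn, of U "S - U"] by (auto simp: U_def)
  then show "(a, y) \<in> ?R\<^sup>*" using zy U_all by blast
qed

section \<open>Two trees spanned by an open connected subset\<close>

lemma is_tree_split:
  assumes "is_tree V E" "S \<subseteq> tree_space V E" "S \<noteq> {}"
    "openin (tree_topology V E) S" "connectedin (tree_topology V E) S"
  shows "is_tree (split_vertices S) (split_edges S)"
  using assms is_graph_split[of V E S] acyclic_split[of V E S] graph_connected_split[of V E S]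
  by (simp add: is_tree_def)

lemma is_tree_closure:
  assumes tree: "is_tree V E" and sub: "S \<subseteq> tree_space V E" and "S \<noteq> {}"
    and op: "openin (tree_topology V E) S" and conn: "connectedin (tree_topology V E) S"
  shows "is_tree (Inl -` S \<union> frontier_vertices S) (Inr -` S)"
proof -
  have g: "is_graph V E" using tree by (simp add: is_tree_def)
  note S_sub = tree_space_vimage_subset[OF sub]
  have "is_graph (Inl -` S \<union> frontier_vertices S) (Inr -` S)"
    unfolding is_graph_def
  proof (intro conjI ballI)
    show "finite (Inl -` S \<union> frontier_vertices S)"
      using g S_sub frontier_vertices_subset[OF g sub] by (auto simp: is_graph_def intro: finite_subset)
    fix e assume e: "e \<in> Inr -` S"
    then have "e \<in> E" using S_sub by blast
    then obtain u w where "e = {u, w}" "u \<noteq> w" by (rule is_graph_edgeE[OF g])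
    moreover have "u \<in> Inl -` S \<union> frontier_vertices S" "w \<in> Inl -` S \<union> frontier_vertices S"
      using e calculation by (auto simp: frontier_vertices_def)
    ultimately show "\<exists>u w. e = {u, w} \<and> u \<noteq> w \<and> u \<in> Inl -` S \<union> frontier_vertices S \<and>
        w \<in> Inl -` S \<union> frontier_vertices S"
      by blast
  qed
  moreover have "graph_connected (Inl -` S \<union> frontier_vertices S) (Inr -` S)"
  proof (rule graph_connected_image)
    show "graph_connected (split_vertices S) (split_edges S)"
      using graph_connected_split[OF g sub \<open>S \<noteq> {}\<close> op conn] .
    show "split_proj ` split_vertices S = Inl -` S \<union> frontier_vertices S"
      by (rule split_proj_image_split_vertices)
    show "{split_proj x, split_proj y} \<in> Inr -` S" if xy: "{x, y} \<in> split_edges S" for x y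
    proof -
      obtain e where "Inr e \<in> S" "{x, y} = split_end S e ` e"
        using xy unfolding split_edges_def by blast
      then have "split_proj ` {x, y} \<in> Inr -` S" by simp
      then show ?thesis by simp
    qed
  qed
  moreover have "\<not> has_cycle (Inl -` S \<union> frontier_vertices S) (Inr -` S)"
  proof
    assume "has_cycle (Inl -` S \<union> frontier_vertices S) (Inr -` S)"
    moreover have "Inl -` S \<union> frontier_vertices S \<subseteq> V"
      using S_sub frontier_vertices_subset[OF g sub] by blast
    ultimately have "has_cycle V E" using S_sub(2) by (rule has_cycle_mono)
    then show False using tree by (simp add: is_tree_def)
  qed
  ultimately show ?thesis by (simp add: is_tree_def)
qed

theorem lemma2p8:
  fixes V :: "'v set" and E :: "'v set set" and T' :: "('v + 'v set) set"
  assumes "is_tree V E"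
    and "T' \<subseteq> tree_space V E"
    and "T' \<noteq> {}"
    and "openin (tree_topology V E) T'"
    and "connectedin (tree_topology V E) T'"
  shows "chi_set V E T' = 2 - int (card (tree_boundary V E T'))"
proof -
  have g: "is_graph V E" using assms(1) by (simp add: is_tree_def)
  note fin = finite_tree_space_vimage[OF g assms(2)] finite_dangling_ends[OF g assms(2)]
  have "card (Inl -` T') + card (dangling_ends T') = card (Inr -` T') + 1"
    using tree_card_vertices[OF is_tree_split[OF assms]] card_split_vertices[OF fin(1,3)]
    by (simp add: card_split_edges)
  moreover have "card (Inl -` T') + card (frontier_vertices T') = card (Inr -` T') + 1"
    using tree_card_vertices[OF is_tree_closure[OF assms]] fin
      finite_subset[OF frontier_vertices_subset[OF g assms(2)]] g
    unfolding is_graph_def by (subst (asm) card_Un_disjoint) (auto simp: frontier_vertices_def)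
  moreover have "card (tree_boundary V E T') = card (frontier_vertices T')"
    by (simp add: tree_boundary_openin[OF g assms(4)] card_image)
  ultimately show ?thesis
    using chi_set_openin[OF g assms(2,4)] by linarith
qed

end
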